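(* Let $q\in\mathbb{C}$, $|q|<1$, $\mathbf{s}=(s_1,\dots,s_d)\in\mathbb{N}^d$, $w=|\mathbf{s}|$. Define the power series $F_{\mathrm{I}}(t)=\mathbf{R}^{s_1-1}\mathbf{P}[\mathbf{y}\,\mathbf{R}^{s_2-1}\mathbf{P}[\mathbf{y}\cdots\mathbf{R}^{s_d-1}\mathbf{P}[\mathbf{y}]\cdots]](t)$, $F_{\mathrm{II}}(t)=\mathbf{R}^{s_1}[\mathbf{y}\,\mathbf{R}^{s_2}[\mathbf{y}\cdots\mathbf{R}^{s_d}[\mathbf{y}]\cdots]](t)$, $F_{\mathrm{III}}(t)=\mathbf{P}^{s_1-1}\mathbf{R}[\mathbf{y}\,\mathbf{P}^{s_2}[\mathbf{y}\cdots\mathbf{P}^{s_d}[\mathbf{y}]\cdots]](t)$, $F_{\mathrm{IV}}(t)=\mathbf{R}^{s_1-1}\mathbf{P}[\mathbf{y}\,\mathbf{R}^{s_2}[\mathbf{y}\cdots\mathbf{R}^{s_d}[\mathbf{y}]\cdots]](t)$. Then $\mathfrak{z}_q^{\mathfrak{t}}[\mathbf{s}]=F_{\mathfrak{t}}(1)$ and $\zeta_q^{\mathfrak{t}}[\mathbf{s}]=(1-q)^wF_{\mathfrak{t}}(1)$ for $\mathfrak{t}=\mathrm{II},\mathrm{III}$, and also for $\mathfrak{t}=\mathrm{I},\mathrm{IV}$ when $s_1\ge2$. Moreover, the analogous statements hold for the regularized values of types $\widetilde{\mathrm{I}}$ and $\widetilde{\mathrm{IV}}$: in $F_{\mathrm{I}}$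 one may replace any of the operator blocks $\mathbf{R}^{s_j-1}\mathbf{P}$ by a single $\mathbf{R}$, and in $F_{\mathrm{IV}}$ one may replace the block $\mathbf{R}^{s_1-1}\mathbf{P}$ by a single $\mathbf{R}$; the value at $t=1$ then equals $\mathfrak{z}_q^{\mathbf{t}}[\mathbf{s}']$ where at each replaced position $j$ the entry becomes $(t_j,s'_j)=(1,1)$ and the other entries $(t_j,s'_j)$ are as for type I (resp. IV).
   Context: $\mathfrak{z}_q^{\mathbf{t}}[\mathbf{s}]=\sum_{k_1>\dots>k_d>0}\prod_j\frac{q^{k_jt_j}}{(1-q^{k_j})^{s_j}}$, $\zeta_q^{\mathbf{t}}[\mathbf{s}]=(1-q)^{|\mathbf{s}|}\mathfrak{z}_q^{\mathbf{t}}[\mathbf{s}]$. Types: $\mathfrak{z}_q^{\mathrm{I}}[\mathbf{s}]=\mathfrak{z}_q^{(s_1-1,\dots,s_d-1)}[\mathbf{s}]$, $\mathfrak{z}_q^{\mathrm{II}}[\mathbf{s}]=\mathfrak{z}_q^{(s_1,\dots,s_d)}[\mathbf{s}]$, $\mathfrak{z}_q^{\mathrm{III}}[\mathbf{s}]=\mathfrak{z}_q^{(1,0,\dots,0)}[\mathbf{s}]$, $\mathfrak{z}_q^{\mathrm{IV}}[\mathbf{s}]=\mathfrak{z}_q^{(s_1-1,s_2,\dots,s_d)}[\mathbf{s}]$, similarly for $\zeta_q$. Operators on power series in $t$ without constant term: $\mathbf{P}[f](t)=\sum_{k\ge0}f(q^kt)$, $\mathbf{R}[f](t)=\sum_{k\ge1}f(q^kt)$,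 powers are compositions; $\mathbf{y}$ is multiplication by $\mathbf{y}(t)=t/(1-t)$ (innermost: the function itself). *)

theory Defs
  imports "HOL-Analysis.Analysis"
begin

text \<open>Multiple q-zeta values with general numerator exponents t = (t_1,...,t_d):
  sum over k_1 > ... > k_d > 0 (index j of a list is position j+1).\<close>
definition qmzv_frak :: "complex \<Rightarrow> nat list \<Rightarrow> nat list \<Rightarrow> complex" where
  "qmzv_frak q t s =
     infsum (\<lambda>ks. \<Prod>j<length s. q ^ (ks ! j * t ! j) / (1 - q ^ (ks ! j)) ^ (s ! j))
       {ks. length ks = length s \<and> sorted_wrt (>) ks \<and> (\<forall>k\<in>set ks. 0 < k)}"

definition qmzv :: "complex \<Rightarrow> nat list \<Rightarrow> nat list \<Rightarrow> complex" where
  "qmzv q t s = (1 - q) ^ sum_list s * qmzv_frak q t s"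

definition tI :: "nat list \<Rightarrow> nat list" where "tI s = map (\<lambda>sj. sj - 1) s"
definition tII :: "nat list \<Rightarrow> nat list" where "tII s = s"
definition tIII :: "nat list \<Rightarrow> nat list" where "tIII s = 1 # replicate (length s - 1) 0"
definition tIV :: "nat list \<Rightarrow> nat list" where "tIV s = (hd s - 1) # tl s"

definition Pop :: "complex \<Rightarrow> (complex \<Rightarrow> complex) \<Rightarrow> complex \<Rightarrow> complex" where
  "Pop q f t = (\<Sum>k. f (q ^ k * t))"
definition Rop :: "complex \<Rightarrow> (complex \<Rightarrow> complex) \<Rightarrow> complex \<Rightarrow> complex" where
  "Rop q f t = (\<Sum>k. f (q ^ Suc k * t))"
definition yfun :: "complex \<Rightarrow> complex" where "yfun t = t / (1 - t)"

text \<open>nest [op_1,...,op_d] = op_1[y op_2[y ... op_d[y] ...]]\<close>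
fun nest :: "((complex \<Rightarrow> complex) \<Rightarrow> complex \<Rightarrow> complex) list \<Rightarrow> complex \<Rightarrow> complex" where
  "nest [] = (\<lambda>t. 1)"
| "nest (op # ops) = op (\<lambda>t. yfun t * nest ops t)"

definition FI :: "complex \<Rightarrow> nat list \<Rightarrow> complex \<Rightarrow> complex" where
  "FI q s = nest (map (\<lambda>sj. (Rop q ^^ (sj - 1)) \<circ> Pop q) s)"
definition FII :: "complex \<Rightarrow> nat list \<Rightarrow> complex \<Rightarrow> complex" where
  "FII q s = nest (map (\<lambda>sj. Rop q ^^ sj) s)"
definition FIII :: "complex \<Rightarrow> nat list \<Rightarrow> complex \<Rightarrow> complex" where
  "FIII q s = nest (((Pop q ^^ (hd s - 1)) \<circ> Rop q) # map (\<lambda>sj. Pop q ^^ sj) (tl s))"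
definition FIV :: "complex \<Rightarrow> nat list \<Rightarrow> complex \<Rightarrow> complex" where
  "FIV q s = nest (((Rop q ^^ (hd s - 1)) \<circ> Pop q) # map (\<lambda>sj. Rop q ^^ sj) (tl s))"

text \<open>Regularized type I~: the blocks at (0-based) positions in J are replaced by a single R.\<close>
definition FIreg :: "complex \<Rightarrow> nat set \<Rightarrow> nat list \<Rightarrow> complex \<Rightarrow> complex" where
  "FIreg q J s = nest (map (\<lambda>j. if j \<in> J then Rop q else (Rop q ^^ (s ! j - 1)) \<circ> Pop q)
                        [0..<length s])"
definition sIreg :: "nat set \<Rightarrow> nat list \<Rightarrow> nat list" where
  "sIreg J s = map (\<lambda>j. if j \<in> J then 1 else s ! j) [0..<length s]"
definition tIreg :: "nat set \<Rightarrow> nat list \<Rightarrow> nat list" where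
  "tIreg J s = map (\<lambda>j. if j \<in> J then 1 else s ! j - 1) [0..<length s]"

definition FIVreg :: "complex \<Rightarrow> nat list \<Rightarrow> complex \<Rightarrow> complex" where
  "FIVreg q s = nest (Rop q # map (\<lambda>sj. Rop q ^^ sj) (tl s))"

end

theory Submission
  imports Defs
begin

text \<open>Represent a function f by a q-expansion f(q^n) = sum_x b(x) q^(n K(x)), valid for n >= n0.
  The operator R multiplies the coefficients by q^K/(1 - q^K) and P by 1/(1 - q^K): expand
  1/(1 - q^K) as a geometric series and interchange the absolutely convergent double sum.
  Multiplication by y(t) = sum_{j >= 1} t^j turns an expansion indexed by tuples k_2 > ... > k_d
  with exponent k_2 into one indexed by k_1 > k_2 > ... > k_d with exponent k_1. Building F from
  the inside out therefore produces the summands of the q-MZV whose t_j is the number of R's and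
  whose s_j is the number of operators in the j-th block. Since y has a pole at t = 1, these
  expansions hold only for n >= 1; an R in the outermost block evaluates its argument at qt and so
  makes the expansion valid at t = 1 (n = 0) as well.\<close>

lemma has_sum_geometric:
  fixes z :: "'a :: {real_normed_field, banach}"
  assumes "norm z < 1"
  shows "((\<lambda>k. z ^ k) has_sum (1 / (1 - z))) UNIV"
proof (rule norm_summable_imp_has_sum)
  show "summable (\<lambda>k. norm (z ^ k))"
    unfolding norm_power using assms by (intro summable_geometric) simp
  show "(\<lambda>k. z ^ k) sums (1 / (1 - z))"
    using geometric_sums[OF assms] by simp
qed

lemma abs_summable_on_SigmaI:
  assumes "\<And>x. x \<in> A \<Longrightarrow> ((\<lambda>y. norm (g (x, y))) has_sum \<rho> x) (B x)"
    and "\<rho> summable_on A"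
  shows "(\<lambda>z. norm (g z)) summable_on Sigma A B"
proof (rule Infinite_Sum.abs_summable_on_Sigma_iff[THEN iffD2], intro conjI ballI)
  show "(\<lambda>y. norm (g (x, y))) summable_on B x" if "x \<in> A" for x
    using assms(1)[OF that] by (auto simp: summable_on_def)
  have "norm (\<Sum>\<^sub>\<infinity>y\<in>B x. norm (g (x, y))) = \<rho> x" if "x \<in> A" for x
    using infsumI[OF assms(1)[OF that]] has_sum_nonneg[OF assms(1)[OF that]] by simp
  then have "(\<lambda>x. norm (\<Sum>\<^sub>\<infinity>y\<in>B x. norm (g (x, y)))) summable_on A \<longleftrightarrow> \<rho> summable_on A"
    by (intro summable_on_cong) simp
  with assms(2) show "(\<lambda>x. norm (\<Sum>\<^sub>\<infinity>y\<in>B x. norm (g (x, y)))) summable_on A"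
    by simp
qed

definition has_q_expansion ::
  "complex \<Rightarrow> nat \<Rightarrow> (complex \<Rightarrow> complex) \<Rightarrow> 'a set \<Rightarrow> ('a \<Rightarrow> complex) \<Rightarrow> ('a \<Rightarrow> nat) \<Rightarrow> bool"
  where "has_q_expansion q n0 f X b K \<longleftrightarrow>
    (\<forall>n\<ge>n0. ((\<lambda>x. b x * q ^ (n * K x)) has_sum f (q ^ n)) X)"

lemma has_q_expansion_cong:
  assumes "has_q_expansion q n0 f X b K" "\<And>x. x \<in> X \<Longrightarrow> b x = b' x"
  shows "has_q_expansion q n0 f X b' K"
  unfolding has_q_expansion_def
proof (intro allI impI)
  fix n assume "n0 \<le> n"
  with assms(1) have "((\<lambda>x. b x * q ^ (n * K x)) has_sum f (q ^ n)) X"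
    unfolding has_q_expansion_def by blast
  then show "((\<lambda>x. b' x * q ^ (n * K x)) has_sum f (q ^ n)) X"
    by (rule has_sum_cong[THEN iffD1, rotated]) (simp add: assms(2))
qed

lemma has_q_expansion_mono:
  "has_q_expansion q m f X b K \<Longrightarrow> m \<le> n \<Longrightarrow> has_q_expansion q n f X b K"
  unfolding has_q_expansion_def by auto

lemma has_q_expansion_suminf:
  fixes q :: complex
  assumes q: "norm q < 1" and K: "\<forall>x\<in>X. 1 \<le> K x"
    and f: "has_q_expansion q n f X b K"
  shows "((\<lambda>x. b x * q ^ (n * K x) / (1 - q ^ K x)) has_sum (\<Sum>k. f (q ^ (n + k)))) X"
proof -
  define c where "c x = b x * q ^ (n * K x)" for x
  define g where "g = (\<lambda>(x, k). c x * (q ^ K x) ^ k)"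
  have norm_qK: "norm (q ^ K x) \<le> norm q" if "x \<in> X" for x
    using K that q unfolding norm_power
    by (metis norm_ge_zero less_imp_le power_decreasing power_one_right)
  with q have norm_qK_less: "norm (q ^ K x) < 1" if "x \<in> X" for x
    using that by fastforce
  have rows: "((\<lambda>k. g (x, k)) has_sum c x / (1 - q ^ K x)) UNIV" if "x \<in> X" for x
    using has_sum_cmult_right[OF has_sum_geometric[OF norm_qK_less[OF that]], of "c x"]
    by (simp add: g_def)
  have norm_rows: "((\<lambda>k. norm (g (x, k))) has_sum norm (c x) / (1 - norm (q ^ K x))) UNIV"
    if "x \<in> X" for x
    using has_sum_cmult_right[OF has_sum_geometric[of "norm (q ^ K x)"], of "norm (c x)"]
      norm_qK_less[OF that] by (simp add: g_def norm_mult norm_power)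
  have "c summable_on X"
    using f unfolding has_q_expansion_def c_def summable_on_def by blast
  then have "(\<lambda>x. norm (c x) * (1 / (1 - norm q))) summable_on X"
    by (intro summable_on_cmult_left) (simp add: summable_on_iff_abs_summable_on_complex)
  then have "(\<lambda>x. norm (c x) / (1 - norm (q ^ K x))) summable_on X"
  proof (rule summable_on_comparison_test)
    fix x assume x: "x \<in> X"
    have "0 < 1 - norm q" "1 - norm q \<le> 1 - norm (q ^ K x)"
      using norm_qK[OF x] q by simp_all
    then have "norm (c x) / (1 - norm (q ^ K x)) \<le> norm (c x) / (1 - norm q)"
      by (rule frac_le[OF norm_ge_zero order_refl])
    then show "norm (c x) / (1 - norm (q ^ K x)) \<le> norm (c x) * (1 / (1 - norm q))"
      by simp
    show "0 \<le> norm (c x) / (1 - norm (q ^ K x))"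
      using norm_qK_less[OF x] by simp
  qed
  with norm_rows have "(\<lambda>z. norm (g z)) summable_on X \<times> UNIV"
    by (intro abs_summable_on_SigmaI)
  then obtain S where S: "(g has_sum S) (X \<times> UNIV)"
    using abs_summable_summable summable_on_def by blast
  have "((\<lambda>x. c x / (1 - q ^ K x)) has_sum S) X"
    using has_sum_Sigma'[OF S] rows by simp
  moreover have "((\<lambda>k. f (q ^ (n + k))) has_sum S) UNIV"
  proof (rule has_sum_Sigma')
    show "((\<lambda>(k, x). g (x, k)) has_sum S) (UNIV \<times> X)"
      using S has_sum_swap by blast
    have "b x * q ^ ((n + k) * K x) = g (x, k)" for x k
      by (simp add: g_def c_def algebra_simps power_add power_mult[symmetric])
    moreover have "((\<lambda>x. b x * q ^ ((n + k) * K x)) has_sum f (q ^ (n + k))) X" for k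
      using f unfolding has_q_expansion_def by simp
    ultimately show "((\<lambda>x. (\<lambda>(k, x). g (x, k)) (k, x)) has_sum f (q ^ (n + k))) X" for k
      by simp
  qed
  ultimately show ?thesis
    unfolding c_def using has_sum_imp_sums sums_unique by metis
qed

lemma has_q_expansion_Rop:
  fixes q :: complex
  assumes q: "norm q < 1" and K: "\<forall>x\<in>X. 1 \<le> K x"
    and f: "has_q_expansion q (Suc n0) f X b K"
  shows "has_q_expansion q n0 (Rop q f) X (\<lambda>x. b x * (q ^ K x / (1 - q ^ K x))) K"
  unfolding has_q_expansion_def
proof (intro allI impI)
  fix n assume "n0 \<le> n"
  then have "has_q_expansion q (Suc n) f X b K"
    by (intro has_q_expansion_mono[OF f]) simp
  then have "((\<lambda>x. b x * q ^ (Suc n * K x) / (1 - q ^ K x)) has_sum (\<Sum>k. f (q ^ (Suc n + k)))) X"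
    by (rule has_q_expansion_suminf[OF q K])
  moreover have "Rop q f (q ^ n) = (\<Sum>k. f (q ^ (Suc n + k)))"
  proof -
    have "q ^ Suc k * q ^ n = q ^ (Suc n + k)" for k
      by (metis add.commute add_Suc_shift power_add)
    then show ?thesis
      unfolding Rop_def by (simp only:)
  qed
  moreover have "b x * (q ^ K x / (1 - q ^ K x)) * q ^ (n * K x) =
      b x * q ^ (Suc n * K x) / (1 - q ^ K x)" for x
    by (simp add: power_add mult_ac)
  ultimately show "((\<lambda>x. b x * (q ^ K x / (1 - q ^ K x)) * q ^ (n * K x)) has_sum Rop q f (q ^ n)) X"
    by (simp only:)
qed

lemma has_q_expansion_Pop:
  fixes q :: complex
  assumes q: "norm q < 1" and K: "\<forall>x\<in>X. 1 \<le> K x"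
    and f: "has_q_expansion q n0 f X b K"
  shows "has_q_expansion q n0 (Pop q f) X (\<lambda>x. b x / (1 - q ^ K x)) K"
  unfolding has_q_expansion_def
proof (intro allI impI)
  fix n assume "n0 \<le> n"
  with f have "has_q_expansion q n f X b K"
    by (rule has_q_expansion_mono)
  then have "((\<lambda>x. b x * q ^ (n * K x) / (1 - q ^ K x)) has_sum (\<Sum>k. f (q ^ (n + k)))) X"
    by (rule has_q_expansion_suminf[OF q K])
  moreover have "Pop q f (q ^ n) = (\<Sum>k. f (q ^ (n + k)))"
    unfolding Pop_def by (simp only: power_add mult.commute)
  moreover have "b x / (1 - q ^ K x) * q ^ (n * K x) = b x * q ^ (n * K x) / (1 - q ^ K x)" for x
    by simp
  ultimately show "((\<lambda>x. b x / (1 - q ^ K x) * q ^ (n * K x)) has_sum Pop q f (q ^ n)) X"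
    by (simp only:)
qed

text \<open>The shift d counts the R's: each of them evaluates its argument at qt and so extends
  the range of validity of an expansion by one step.\<close>

definition expansion_multiplier ::
  "complex \<Rightarrow> ((complex \<Rightarrow> complex) \<Rightarrow> complex \<Rightarrow> complex) \<Rightarrow> nat \<Rightarrow> nat \<Rightarrow> nat \<Rightarrow> bool"
  where "expansion_multiplier q op t s d \<longleftrightarrow>
    (\<forall>f (X :: nat list set) b K n. (\<forall>x\<in>X. 1 \<le> K x) \<longrightarrow> has_q_expansion q (n + d) f X b K \<longrightarrow>
       has_q_expansion q n (op f) X (\<lambda>x. b x * (q ^ (K x * t) / (1 - q ^ K x) ^ s)) K)"

lemma expansion_multiplier_id: "expansion_multiplier q id 0 0 0"
  unfolding expansion_multiplier_def by simp

lemma expansion_multiplier_Rop: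
  assumes "norm q < 1" shows "expansion_multiplier q (Rop q) 1 1 1"
  unfolding expansion_multiplier_def
proof (intro allI impI)
  fix f and X :: "nat list set" and b K n
  assume K: "\<forall>x\<in>X. 1 \<le> K x" and f: "has_q_expansion q (n + 1) f X b K"
  have "has_q_expansion q n (Rop q f) X (\<lambda>x. b x * (q ^ K x / (1 - q ^ K x))) K"
    using f by (intro has_q_expansion_Rop[OF assms K]) simp
  then show "has_q_expansion q n (Rop q f) X (\<lambda>x. b x * (q ^ (K x * 1) / (1 - q ^ K x) ^ 1)) K"
    by simp
qed

lemma expansion_multiplier_Pop:
  assumes "norm q < 1" shows "expansion_multiplier q (Pop q) 0 1 0"
  unfolding expansion_multiplier_def
proof (intro allI impI)
  fix f and X :: "nat list set" and b K n
  assume K: "\<forall>x\<in>X. 1 \<le> K x" and f: "has_q_expansion q (n + 0) f X b K"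
  have "has_q_expansion q n (Pop q f) X (\<lambda>x. b x / (1 - q ^ K x)) K"
    using f by (intro has_q_expansion_Pop[OF assms K]) simp
  then show "has_q_expansion q n (Pop q f) X (\<lambda>x. b x * (q ^ (K x * 0) / (1 - q ^ K x) ^ 1)) K"
    by simp
qed

lemma expansion_multiplier_comp:
  assumes "expansion_multiplier q op1 t1 s1 d1" "expansion_multiplier q op2 t2 s2 d2"
  shows "expansion_multiplier q (op2 \<circ> op1) (t1 + t2) (s1 + s2) (d1 + d2)"
  unfolding expansion_multiplier_def
proof (intro allI impI)
  fix f and X :: "nat list set" and b K n
  assume K: "\<forall>x\<in>X. 1 \<le> K x" and f: "has_q_expansion q (n + (d1 + d2)) f X b K"
  have "has_q_expansion q (n + d2 + d1) f X b K"
    using f by (simp add: ac_simps)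
  then have "has_q_expansion q (n + d2) (op1 f) X (\<lambda>x. b x * (q ^ (K x * t1) / (1 - q ^ K x) ^ s1)) K"
    using assms(1)[unfolded expansion_multiplier_def, rule_format (no_asm), OF K] by blast
  then have "has_q_expansion q n (op2 (op1 f)) X
      (\<lambda>x. b x * (q ^ (K x * t1) / (1 - q ^ K x) ^ s1) * (q ^ (K x * t2) / (1 - q ^ K x) ^ s2)) K"
    using assms(2)[unfolded expansion_multiplier_def, rule_format (no_asm), OF K] by blast
  then show "has_q_expansion q n ((op2 \<circ> op1) f) X
      (\<lambda>x. b x * (q ^ (K x * (t1 + t2)) / (1 - q ^ K x) ^ (s1 + s2))) K"
    unfolding comp_apply
    by (rule has_q_expansion_cong) (simp add: power_add distrib_left times_divide_times_eq)
qed

lemma expansion_multiplier_funpow: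
  assumes "expansion_multiplier q op t s d"
  shows "expansion_multiplier q (op ^^ a) (a * t) (a * s) (a * d)"
proof (induction a)
  case 0
  then show ?case using expansion_multiplier_id by (simp add: id_def)
next
  case (Suc a)
  then show ?case
    using expansion_multiplier_comp[OF Suc.IH assms]
    by (simp only: funpow.simps(2) mult_Suc add.commute)
qed

lemma expansion_multiplier_apply:
  fixes X :: "nat list set"
  assumes "expansion_multiplier q op t s d" "\<forall>x\<in>X. 1 \<le> K x"
    and "has_q_expansion q 1 f X b K"
  shows "has_q_expansion q (1 - d) (op f) X (\<lambda>x. b x * (q ^ (K x * t) / (1 - q ^ K x) ^ s)) K"
proof -
  have "has_q_expansion q (1 - d + d) f X b K"
    using assms(3) by (rule has_q_expansion_mono) simp
  then show ?thesis
    using assms(1)[unfolded expansion_multiplier_def, rule_format (no_asm), OF assms(2)] by blast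
qed

lemma expansion_multiplier_Rop_funpow:
  "norm q < 1 \<Longrightarrow> expansion_multiplier q (Rop q ^^ a) a a a"
  using expansion_multiplier_funpow[OF expansion_multiplier_Rop] by simp

lemma expansion_multiplier_Pop_funpow:
  "norm q < 1 \<Longrightarrow> expansion_multiplier q (Pop q ^^ a) 0 a 0"
  using expansion_multiplier_funpow[OF expansion_multiplier_Pop] by simp

lemma expansion_multiplier_Rop_funpow_Pop:
  assumes "norm q < 1" "1 \<le> s"
  shows "expansion_multiplier q (Rop q ^^ (s - 1) \<circ> Pop q) (s - 1) s (s - 1)"
  using expansion_multiplier_comp[OF expansion_multiplier_Pop expansion_multiplier_Rop_funpow,
      of q "s - 1"] assms by simp

lemma expansion_multiplier_Pop_funpow_Rop:
  assumes "norm q < 1" "1 \<le> s"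
  shows "expansion_multiplier q (Pop q ^^ (s - 1) \<circ> Rop q) 1 s 1"
  using expansion_multiplier_comp[OF expansion_multiplier_Rop expansion_multiplier_Pop_funpow,
      of q "s - 1"] assms by simp

definition qmzv_indices :: "nat \<Rightarrow> nat list set" where
  "qmzv_indices d = {ks. length ks = d \<and> sorted_wrt (>) ks \<and> (\<forall>k\<in>set ks. 0 < k)}"

text \<open>The value 0 on the empty tuple matches nest [] = 1.\<close>

definition lead :: "nat list \<Rightarrow> nat" where
  "lead ks = (case ks of [] \<Rightarrow> 0 | k # _ \<Rightarrow> k)"

lemma lead_simps [simp]: "lead [] = 0" "lead (k # ks) = k"
  by (simp_all add: lead_def)

lemma qmzv_indices_0: "qmzv_indices 0 = {[]}"
  by (auto simp: qmzv_indices_def)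

lemma Cons_mem_qmzv_indices_iff:
  "k # ks \<in> qmzv_indices (Suc d) \<longleftrightarrow> ks \<in> qmzv_indices d \<and> lead ks < k"
  by (cases ks) (auto simp: qmzv_indices_def)

lemma qmzv_indices_Suc:
  "qmzv_indices (Suc d) = {k # ks |k ks. ks \<in> qmzv_indices d \<and> lead ks < k}"
proof (intro set_eqI iffI)
  fix ks assume ks: "ks \<in> qmzv_indices (Suc d)"
  then obtain k x where "ks = k # x"
    by (cases ks) (simp_all add: qmzv_indices_def)
  with ks show "ks \<in> {k # ks |k ks. ks \<in> qmzv_indices d \<and> lead ks < k}"
    by (simp add: Cons_mem_qmzv_indices_iff)
qed (auto simp: Cons_mem_qmzv_indices_iff)

definition qmzv_summand :: "complex \<Rightarrow> nat list \<Rightarrow> nat list \<Rightarrow> nat list \<Rightarrow> complex" where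
  "qmzv_summand q t s ks = (\<Prod>j<length s. q ^ (ks ! j * t ! j) / (1 - q ^ (ks ! j)) ^ (s ! j))"

lemma qmzv_summand_Cons:
  "qmzv_summand q (t # ts) (s # ss) (k # ks) =
     qmzv_summand q ts ss ks * (q ^ (k * t) / (1 - q ^ k) ^ s)"
  unfolding qmzv_summand_def length_Cons prod.lessThan_Suc_shift nth_Cons_0 nth_Cons_Suc
  by (simp add: mult.commute)

lemma qmzv_frak_eq_infsum:
  "qmzv_frak q t s = infsum (qmzv_summand q t s) (qmzv_indices (length s))"
  unfolding qmzv_frak_def qmzv_summand_def qmzv_indices_def ..

lemma has_q_expansion_yfun:
  fixes q :: complex and X :: "nat list set"
  assumes q: "norm q < 1" and g: "has_q_expansion q 1 g X b K"
  shows "has_q_expansion q 1 (\<lambda>u. yfun u * g u) {k # x |k x. x \<in> X \<and> K x < k}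
           (\<lambda>ks. b (tl ks)) lead"
  unfolding has_q_expansion_def
proof (intro allI impI)
  fix n :: nat assume n: "1 \<le> n"
  define z where "z = q ^ n"
  have z: "norm z < 1"
    unfolding z_def norm_power using q n by (simp add: power_less_one_iff)
  define c where "c x = b x * z ^ K x" for x
  have c: "(c has_sum g z) X"
    using g n unfolding has_q_expansion_def c_def z_def by (simp add: power_mult)
  then have c_norm: "(\<lambda>x. norm (c x)) summable_on X"
    using summable_on_iff_abs_summable_on_complex summable_on_def by blast
  define h where "h = (\<lambda>(x, j). c x * z ^ j)"
  have rows: "((\<lambda>j. h (x, j)) has_sum c x * (z / (1 - z))) {1..}" for x
    unfolding h_def using has_sum_cmult_right[OF has_sum_geometric_from_1[OF z]] by simp
  have norm_rows: "((\<lambda>j. norm (h (x, j))) has_sum norm (c x) * (norm z / (1 - norm z))) {1..}"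
    for x
    unfolding h_def using has_sum_cmult_right[OF has_sum_geometric_from_1[of "norm z"]] z
    by (simp add: norm_mult norm_power)
  have "(\<lambda>x. norm (c x) * (norm z / (1 - norm z))) summable_on X"
    using c_norm by (rule summable_on_cmult_left)
  with norm_rows have "(\<lambda>p. norm (h p)) summable_on X \<times> {1..}"
    by (intro abs_summable_on_SigmaI)
  then have "h summable_on X \<times> {1..}"
    by (rule abs_summable_summable)
  then have "(h has_sum g z * (z / (1 - z))) (X \<times> {1..})"
    using rows has_sum_cmult_left[OF c] by (intro has_sum_SigmaI)
  txt \<open>Since y(z) z^K = sum_{k > K} z^k, the pair (x, j) becomes the tuple (K x + j) # x.\<close>
  also have "?this \<longleftrightarrow> ((\<lambda>ks. b (tl ks) * q ^ (n * lead ks)) has_sum g z * (z / (1 - z)))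
      {k # x |k x. x \<in> X \<and> K x < k}"
  proof (rule has_sum_reindex_bij_witness[where j = "\<lambda>(x, j). (K x + j) # x"
        and i = "\<lambda>ks. (tl ks, hd ks - K (tl ks))"])
    show "b (tl ((\<lambda>(x, j). (K x + j) # x) p)) * q ^ (n * lead ((\<lambda>(x, j). (K x + j) # x) p)) = h p"
      for p
      by (auto simp: h_def c_def z_def power_add power_mult[symmetric] algebra_simps split: prod.split)
  qed auto
  finally show "((\<lambda>ks. b (tl ks) * q ^ (n * lead ks)) has_sum yfun (q ^ n) * g (q ^ n))
      {k # x |k x. x \<in> X \<and> K x < k}"
    by (simp add: yfun_def z_def mult.commute)
qed

lemma nest_Cons_has_q_expansion:
  assumes q: "norm q < 1"
    and ops: "has_q_expansion q 1 (nest ops) (qmzv_indices (length ops)) (qmzv_summand q ts ss) lead"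
    and op: "expansion_multiplier q op t s d"
  shows "has_q_expansion q (1 - d) (nest (op # ops)) (qmzv_indices (Suc (length ops)))
           (qmzv_summand q (t # ts) (s # ss)) lead"
proof -
  have y: "has_q_expansion q 1 (\<lambda>u. yfun u * nest ops u) (qmzv_indices (Suc (length ops)))
      (\<lambda>ks. qmzv_summand q ts ss (tl ks)) lead"
    unfolding qmzv_indices_Suc by (rule has_q_expansion_yfun[OF q ops])
  have "\<forall>ks\<in>qmzv_indices (Suc (length ops)). 1 \<le> lead ks"
    by (auto simp: qmzv_indices_Suc)
  from expansion_multiplier_apply[OF op this y]
  have "has_q_expansion q (1 - d) (nest (op # ops)) (qmzv_indices (Suc (length ops)))
      (\<lambda>ks. qmzv_summand q ts ss (tl ks) * (q ^ (lead ks * t) / (1 - q ^ lead ks) ^ s)) lead"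
    by simp
  then show ?thesis
    by (rule has_q_expansion_cong) (auto simp: qmzv_indices_Suc qmzv_summand_Cons)
qed

lemma nest_has_q_expansion:
  assumes q: "norm q < 1"
  shows "length ts = length ops \<Longrightarrow> length ss = length ops \<Longrightarrow>
    (\<And>j. j < length ops \<Longrightarrow> \<exists>d. expansion_multiplier q (ops ! j) (ts ! j) (ss ! j) d) \<Longrightarrow>
    has_q_expansion q 1 (nest ops) (qmzv_indices (length ops)) (qmzv_summand q ts ss) lead"
proof (induction ops arbitrary: ts ss)
  case Nil
  then show ?case
    by (auto simp: has_q_expansion_def qmzv_indices_0 qmzv_summand_def intro!: has_sum_finiteI)
next
  case (Cons op ops)
  then obtain t ts' s ss' where ts: "ts = t # ts'" and ss: "ss = s # ss'"
    by (cases ts; cases ss) auto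
  with Cons.prems have "has_q_expansion q 1 (nest ops) (qmzv_indices (length ops))
      (qmzv_summand q ts' ss') lead"
    by (intro Cons.IH) fastforce+
  moreover obtain d where "expansion_multiplier q op t s d"
    using Cons.prems(3)[of 0] ts ss by auto
  ultimately have "has_q_expansion q (1 - d) (nest (op # ops)) (qmzv_indices (Suc (length ops)))
      (qmzv_summand q ts ss) lead"
    unfolding ts ss by (rule nest_Cons_has_q_expansion[OF q])
  then show ?case
    unfolding length_Cons by (rule has_q_expansion_mono) simp
qed

lemma qmzv_frak_eq_nest:
  assumes q: "norm q < 1"
    and "length ts = length ops" "length ss = length ops"
    and "\<And>j. j < length ops \<Longrightarrow> \<exists>d. expansion_multiplier q (ops ! j) (ts ! j) (ss ! j) d"
    and "expansion_multiplier q op t s d" "1 \<le> d"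
  shows "qmzv_frak q (t # ts) (s # ss) = nest (op # ops) 1"
proof -
  have "has_q_expansion q 0 (nest (op # ops)) (qmzv_indices (length (s # ss)))
      (qmzv_summand q (t # ts) (s # ss)) lead"
    using nest_Cons_has_q_expansion[OF q nest_has_q_expansion[OF q assms(2-4)] assms(5)] assms(3,6)
    by simp
  then have "((\<lambda>ks. qmzv_summand q (t # ts) (s # ss) ks * q ^ (0 * lead ks)) has_sum
      nest (op # ops) (q ^ 0)) (qmzv_indices (length (s # ss)))"
    unfolding has_q_expansion_def by blast
  then have "(qmzv_summand q (t # ts) (s # ss) has_sum nest (op # ops) 1)
      (qmzv_indices (length (s # ss)))"
    by simp
  then show ?thesis
    unfolding qmzv_frak_eq_infsum by (rule infsumI)
qed

lemma qmzv_frak_tII: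
  assumes q: "norm q < 1" and s: "s \<noteq> []" "\<forall>sj\<in>set s. 1 \<le> sj"
  shows "qmzv_frak q (tII s) s = FII q s 1"
proof -
  obtain s0 r where s0r: "s = s0 # r"
    using s(1) by (cases s) auto
  show ?thesis
    unfolding s0r tII_def FII_def list.map(2)
  proof (rule qmzv_frak_eq_nest[OF q])
    show "expansion_multiplier q (Rop q ^^ s0) s0 s0 s0" "1 \<le> s0"
      using expansion_multiplier_Rop_funpow[OF q] s(2) s0r by auto
    show "\<exists>d. expansion_multiplier q (map ((^^) (Rop q)) r ! j) (r ! j) (r ! j) d"
      if "j < length (map ((^^) (Rop q)) r)" for j
      using that expansion_multiplier_Rop_funpow[OF q] by auto
  qed simp_all
qed

lemma qmzv_frak_tIII:
  assumes q: "norm q < 1" and s: "s \<noteq> []" "\<forall>sj\<in>set s. 1 \<le> sj"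
  shows "qmzv_frak q (tIII s) s = FIII q s 1"
proof -
  obtain s0 r where s0r: "s = s0 # r"
    using s(1) by (cases s) auto
  show ?thesis
    unfolding s0r tIII_def FIII_def list.sel length_Cons diff_Suc_1
  proof (rule qmzv_frak_eq_nest[OF q])
    show "expansion_multiplier q (Pop q ^^ (s0 - 1) \<circ> Rop q) 1 s0 1"
      using expansion_multiplier_Pop_funpow_Rop[OF q] s(2) s0r by auto
    show "\<exists>d. expansion_multiplier q (map ((^^) (Pop q)) r ! j) (replicate (length r) 0 ! j) (r ! j) d"
      if "j < length (map ((^^) (Pop q)) r)" for j
      using that expansion_multiplier_Pop_funpow[OF q] by auto
  qed simp_all
qed

lemma qmzv_frak_tI:
  assumes q: "norm q < 1" and s: "s \<noteq> []" "\<forall>sj\<in>set s. 1 \<le> sj" and "2 \<le> hd s"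
  shows "qmzv_frak q (tI s) s = FI q s 1"
proof -
  obtain s0 r where s0r: "s = s0 # r"
    using s(1) by (cases s) auto
  show ?thesis
    unfolding s0r tI_def FI_def list.map(2)
  proof (rule qmzv_frak_eq_nest[OF q])
    show "expansion_multiplier q (Rop q ^^ (s0 - 1) \<circ> Pop q) (s0 - 1) s0 (s0 - 1)" "1 \<le> s0 - 1"
      using expansion_multiplier_Rop_funpow_Pop[OF q] assms(4) s0r by auto
    show "\<exists>d. expansion_multiplier q (map (\<lambda>sj. Rop q ^^ (sj - 1) \<circ> Pop q) r ! j)
        (map (\<lambda>sj. sj - 1) r ! j) (r ! j) d"
      if "j < length (map (\<lambda>sj. Rop q ^^ (sj - 1) \<circ> Pop q) r)" for j
      using that expansion_multiplier_Rop_funpow_Pop[OF q, of "r ! j"] s(2) s0r by auto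
  qed simp_all
qed

lemma qmzv_frak_tIV:
  assumes q: "norm q < 1" and s: "s \<noteq> []" "\<forall>sj\<in>set s. 1 \<le> sj" and "2 \<le> hd s"
  shows "qmzv_frak q (tIV s) s = FIV q s 1"
proof -
  obtain s0 r where s0r: "s = s0 # r"
    using s(1) by (cases s) auto
  show ?thesis
    unfolding s0r tIV_def FIV_def list.sel
  proof (rule qmzv_frak_eq_nest[OF q])
    show "expansion_multiplier q (Rop q ^^ (s0 - 1) \<circ> Pop q) (s0 - 1) s0 (s0 - 1)" "1 \<le> s0 - 1"
      using expansion_multiplier_Rop_funpow_Pop[OF q] assms(4) s0r by auto
    show "\<exists>d. expansion_multiplier q (map ((^^) (Rop q)) r ! j) (r ! j) (r ! j) d"
      if "j < length (map ((^^) (Rop q)) r)" for j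
      using that expansion_multiplier_Rop_funpow[OF q] by auto
  qed simp_all
qed

lemma qmzv_frak_tIVreg:
  assumes q: "norm q < 1"
  shows "qmzv_frak q (1 # tl s) (1 # tl s) = FIVreg q s 1"
  unfolding FIVreg_def
proof (rule qmzv_frak_eq_nest[OF q _ _ _ expansion_multiplier_Rop[OF q]])
  show "\<exists>d. expansion_multiplier q (map ((^^) (Rop q)) (tl s) ! j) (tl s ! j) (tl s ! j) d"
    if "j < length (map ((^^) (Rop q)) (tl s))" for j
    using that expansion_multiplier_Rop_funpow[OF q] by auto
qed simp_all

lemma qmzv_frak_tIreg:
  assumes q: "norm q < 1" and s: "s \<noteq> []" "\<forall>sj\<in>set s. 1 \<le> sj"
    and J: "0 \<in> J \<or> 2 \<le> hd s"
  shows "qmzv_frak q (tIreg J s) (sIreg J s) = FIreg q J s 1"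
proof -
  obtain s0 r where s0r: "s = s0 # r"
    using s(1) by (cases s) auto
  have block: "expansion_multiplier q (if j \<in> J then Rop q else Rop q ^^ (sj - 1) \<circ> Pop q)
      (if j \<in> J then 1 else sj - 1) (if j \<in> J then 1 else sj) (if j \<in> J then 1 else sj - 1)"
    if "1 \<le> sj" for j sj
    using expansion_multiplier_Rop[OF q] expansion_multiplier_Rop_funpow_Pop[OF q that] by simp
  show ?thesis
    unfolding s0r tIreg_def sIreg_def FIreg_def length_Cons map_upt_Suc nth_Cons_0 nth_Cons_Suc
  proof (rule qmzv_frak_eq_nest[OF q _ _ _ block])
    show "1 \<le> s0" using s(2) s0r by simp
    show "1 \<le> (if 0 \<in> J then 1 else s0 - 1)" using J s0r by auto
    show "\<exists>d. expansion_multiplier q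
        (map (\<lambda>i. if Suc i \<in> J then Rop q else Rop q ^^ (r ! i - 1) \<circ> Pop q) [0..<length r] ! j)
        (map (\<lambda>i. if Suc i \<in> J then 1 else r ! i - 1) [0..<length r] ! j)
        (map (\<lambda>i. if Suc i \<in> J then 1 else r ! i) [0..<length r] ! j) d"
      if "j < length (map (\<lambda>i. if Suc i \<in> J then Rop q else Rop q ^^ (r ! i - 1) \<circ> Pop q)
          [0..<length r])" for j
      using that block[of "r ! j" "Suc j"] s(2) s0r by auto
  qed simp_all
qed

theorem corollary6p4:
  fixes q :: complex and s :: "nat list"
  assumes "norm q < 1" and "s \<noteq> []" and "\<forall>sj\<in>set s. 1 \<le> sj"
  shows "(qmzv_frak q (tII s) s = FII q s 1 \<and>
          qmzv q (tII s) s = (1 - q) ^ sum_list s * FII q s 1) \<and>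
         (qmzv_frak q (tIII s) s = FIII q s 1 \<and>
          qmzv q (tIII s) s = (1 - q) ^ sum_list s * FIII q s 1) \<and>
         (2 \<le> hd s \<longrightarrow>
           qmzv_frak q (tI s) s = FI q s 1 \<and>
           qmzv q (tI s) s = (1 - q) ^ sum_list s * FI q s 1) \<and>
         (2 \<le> hd s \<longrightarrow>
           qmzv_frak q (tIV s) s = FIV q s 1 \<and>
           qmzv q (tIV s) s = (1 - q) ^ sum_list s * FIV q s 1) \<and>
         (\<forall>J. J \<subseteq> {..<length s} \<longrightarrow> (0 \<in> J \<or> 2 \<le> hd s) \<longrightarrow>
           qmzv_frak q (tIreg J s) (sIreg J s) = FIreg q J s 1) \<and>
         qmzv_frak q (1 # tl s) (1 # tl s) = FIVreg q s 1"
  using qmzv_frak_tII[OF assms] qmzv_frak_tIII[OF assms] qmzv_frak_tI[OF assms]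
    qmzv_frak_tIV[OF assms] qmzv_frak_tIreg[OF assms] qmzv_frak_tIVreg[OF assms(1)]
  by (simp add: qmzv_def)

end
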